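(* Let $H$ be the 28-element set $H=\{n_M : n\in\mathbb{Z}_{12}\}\cup\{n_m : n\in\mathbb{Z}_{12}\}\cup\{n_{\mathrm{aug}} : n\in\{0,1,2,3\}\}$, and let $\mathcal{S}$ be the symmetric relation on $H$ consisting exactly of the pairs $(n_M,n_m)$, $(n_M,(n+4)_m)$, $(n_M,(n\bmod 4)_{\mathrm{aug}})$, $(n_m,n_M)$, $(n_m,(n+8)_M)$, $(n_m,((n+3)\bmod 4)_{\mathrm{aug}})$ for $n\in\mathbb{Z}_{12}$, together with the reverses of all these pairs. Then the monoid $M_{\mathcal{S}}$ of relations on $H$ generated by $\mathcal{S}$ under composition of relations has the presentation $M_{\mathcal{S}}=\langle \mathcal{S}\mid \mathcal{S}^7=\mathcal{S}^5\rangle$.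
   Context: Indices $n$ of $n_M,n_m$ are taken modulo 12; the elements of $H$ are formal labels (musically: $n_M=\{n,n+4,n+7\}$, $n_m=\{n,n+3,n+7\}$, $k_{\mathrm{aug}}=\{k,k+4,k+8\}$ in $\mathbb{Z}_{12}$; $\mathcal{S}$ is Douthett's relation $\mathcal{P}_{1,0}$ of moving one pitch class by a semitone). Composition of relations: $\mathcal{R}'\mathcal{R}$ is the set of pairs $(x,z)$ such that there exists $y$ with $(x,y)\in\mathcal{R}$ and $(y,z)\in\mathcal{R}'$; the monoid identity is the identity relation on $H$. *)

theory Defs
  imports Main "HOL-Library.Numeral_Type"
begin

text \<open>The type chord is exactly the set H, so the identity
  relation Id on this type is the identity relation on H.\<close>
datatype chord = Maj "12" | Min "12" | Aug "4"

text \<open>n mod 4 for n in Z_12, as an element of Z_4 (Rep_bit0 n is the representative in 0..11).\<close>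
definition mod4 :: "12 \<Rightarrow> 4" where
  "mod4 n = of_int (Rep_bit0 n)"

definition S_gen :: "(chord \<times> chord) set" where
  "S_gen = (\<Union>n::12. {(Maj n, Min n), (Maj n, Min (n + 4)), (Maj n, Aug (mod4 n)),
                        (Min n, Maj n), (Min n, Maj (n + 8)), (Min n, Aug (mod4 (n + 3)))})"

definition S_rel :: "(chord \<times> chord) set" where
  "S_rel = S_gen \<union> S_gen\<inverse>"

end

theory Submission
  imports Defs
begin

text \<open>
  Moving one pitch class by a semitone changes the sum of the three pitch classes by one, so S
  always changes the parity of that sum (well defined modulo 12). As S is symmetric and every
  chord has a neighbour, \<open>Id \<subseteq> S^2\<close>; hence the even powers and the odd powers of S form two
  increasing chains, and no even power equals an odd one, since they differ on the diagonal. So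
  \<open>S^7 = S^5\<close> as soon as \<open>S^5\<close> contains every pair of chords of opposite parity, and
  \<open>S^0, ..., S^6\<close> are distinct as soon as \<open>S^4 \<noteq> S^6\<close>. Both are finite checks. Transposition by a
  semitone is an automorphism of S, so the first one only needs to be checked for walks starting
  at 0_M, 0_m and 0_aug; for the second, the augmented triads 0_aug and 2_aug are at distance 6.
\<close>

lemma Id_subset_relpow_2:
  assumes "sym R" and "\<And>x. \<exists>y. (x, y) \<in> R"
  shows "Id \<subseteq> R ^^ 2"
proof -
  have "(x, x) \<in> R O R" for x
  proof -
    obtain y where xy: "(x, y) \<in> R" using assms(2) by blast
    from \<open>sym R\<close> xy have "(y, x) \<in> R" by (rule symD)
    with xy show ?thesis by blast
  qed
  then show ?thesis by (auto simp: numeral_2_eq_2)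
qed

lemma relpow_mono_add_even:
  assumes "Id \<subseteq> R ^^ 2"
  shows "R ^^ n \<subseteq> R ^^ (n + 2 * q)"
proof (induction q)
  case (Suc q)
  have "R ^^ (n + 2 * q) = R ^^ (n + 2 * q) O Id" by simp
  also have "\<dots> \<subseteq> R ^^ (n + 2 * q) O R ^^ 2" using assms by blast
  also have "\<dots> = R ^^ (n + 2 * Suc q)" by (simp add: relpow_add[symmetric])
  finally show ?case using Suc.IH by blast
qed simp

lemma Id_subset_relpow_even:
  assumes "Id \<subseteq> R ^^ 2" and "even n"
  shows "Id \<subseteq> R ^^ n"
  using relpow_mono_add_even[OF assms(1), of 0 "n div 2"] \<open>even n\<close> by simp

lemma relpow_parity:
  fixes p :: "'a \<Rightarrow> bool"
  assumes bipartite: "\<And>x y. (x, y) \<in> R \<Longrightarrow> p x \<noteq> p y" and "(x, y) \<in> R ^^ n"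
  shows "p y = p x \<longleftrightarrow> even n"
  using assms(2)
proof (induction n arbitrary: y)
  case (Suc n)
  then obtain z where xz: "(x, z) \<in> R ^^ n" and zy: "(z, y) \<in> R" by auto
  have "p z = p x \<longleftrightarrow> even n" using Suc.IH[OF xz] .
  moreover have "p z \<noteq> p y" using bipartite[OF zy] .
  ultimately show ?case by (cases "p z") auto
qed simp

lemma relpow_odd_irrefl:
  fixes p :: "'a \<Rightarrow> bool"
  assumes bipartite: "\<And>x y. (x, y) \<in> R \<Longrightarrow> p x \<noteq> p y" and "odd n"
  shows "Id \<inter> R ^^ n = {}"
proof -
  have "(x, x) \<notin> R ^^ n" for x
  proof
    assume "(x, x) \<in> R ^^ n"
    from relpow_parity[where p = p, OF bipartite this] \<open>odd n\<close> show False by simp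
  qed
  then show ?thesis by blast
qed

lemma relpow_even_noteq_odd:
  fixes p :: "'a \<Rightarrow> bool"
  assumes bipartite: "\<And>x y. (x, y) \<in> R \<Longrightarrow> p x \<noteq> p y" and "Id \<subseteq> R ^^ 2"
    and "even a" and "odd b"
  shows "R ^^ a \<noteq> R ^^ b"
  using Id_subset_relpow_even[OF \<open>Id \<subseteq> R ^^ 2\<close> \<open>even a\<close>]
    relpow_odd_irrefl[where p = p, OF bipartite \<open>odd b\<close>] by auto

lemma relpow_add_2_eq_if_saturated:
  fixes p :: "'a \<Rightarrow> bool"
  assumes bipartite: "\<And>x y. (x, y) \<in> R \<Longrightarrow> p x \<noteq> p y" and "Id \<subseteq> R ^^ 2"
    and saturated: "\<And>x y. p y = p x \<longleftrightarrow> even n \<Longrightarrow> (x, y) \<in> R ^^ n"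
  shows "R ^^ (n + 2) = R ^^ n"
proof
  show "R ^^ (n + 2) \<subseteq> R ^^ n"
  proof (rule subrelI)
    fix x y assume "(x, y) \<in> R ^^ (n + 2)"
    from relpow_parity[where p = p, OF bipartite this] have "p y = p x \<longleftrightarrow> even n" by simp
    then show "(x, y) \<in> R ^^ n" by (rule saturated)
  qed
  show "R ^^ n \<subseteq> R ^^ (n + 2)"
    using relpow_mono_add_even[OF \<open>Id \<subseteq> R ^^ 2\<close>, of n 1] by simp
qed

lemma relpow_add_2_eq_if_relpow_eq:
  assumes "Id \<subseteq> R ^^ 2" and "R ^^ j = R ^^ (j + 2 + 2 * q)"
  shows "R ^^ (j + 2) = R ^^ j"
  using relpow_mono_add_even[OF assms(1), of "j + 2" q] relpow_mono_add_even[OF assms(1), of j 1]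
    assms(2) by auto

lemma relpow_add_2_eq_mono:
  fixes R :: "'a rel"
  assumes "R ^^ (j + 2) = R ^^ j" and "j \<le> n"
  shows "R ^^ (n + 2) = R ^^ n"
proof -
  have "R ^^ ((n - j) + (j + 2)) = R ^^ (n - j) O R ^^ (j + 2)" by (rule relpow_add)
  also have "\<dots> = R ^^ (n - j) O R ^^ j" by (simp only: assms(1))
  also have "\<dots> = R ^^ ((n - j) + j)" by (rule relpow_add[symmetric])
  finally show ?thesis using assms(2) by simp
qed

lemma inj_on_relpow_atMost:
  fixes p :: "'a \<Rightarrow> bool"
  assumes bipartite: "\<And>x y. (x, y) \<in> R \<Longrightarrow> p x \<noteq> p y" and Id: "Id \<subseteq> R ^^ 2"
    and grows: "R ^^ n \<noteq> R ^^ (n + 2)"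
  shows "inj_on (\<lambda>k. R ^^ k) {..n + 2}"
proof (rule linorder_inj_onI')
  fix j k assume "j \<in> {..n + 2}" "k \<in> {..n + 2}" "j < k"
  show "R ^^ j \<noteq> R ^^ k"
  proof
    assume eq: "R ^^ j = R ^^ k"
    show False
    proof (cases "even (k - j)")
      case True
      then obtain d where "k - j = 2 * d" by (rule evenE)
      with \<open>j < k\<close> have k: "k = j + 2 + 2 * (d - 1)" by simp
      with eq have "R ^^ j = R ^^ (j + 2 + 2 * (d - 1))" by simp
      then have "R ^^ (j + 2) = R ^^ j" by (rule relpow_add_2_eq_if_relpow_eq[OF Id])
      moreover have "j \<le> n" using k \<open>k \<in> {..n + 2}\<close> by simp
      ultimately have "R ^^ (n + 2) = R ^^ n" by (rule relpow_add_2_eq_mono)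
      with grows show False by simp
    next
      case False
      have "R ^^ a \<noteq> R ^^ b" if "even a" "odd b" for a b
        using bipartite Id that by (rule relpow_even_noteq_odd)
      moreover from False \<open>j < k\<close> have "even j \<and> odd k \<or> odd j \<and> even k" by auto
      ultimately show False using eq by auto
    qed
  qed
qed

lemma relpow_preserved:
  assumes hom: "\<And>x y. (x, y) \<in> R \<Longrightarrow> (f x, f y) \<in> R" and "(x, y) \<in> R ^^ n"
  shows "(f x, f y) \<in> R ^^ n"
  using assms(2)
proof (induction n arbitrary: y)
  case (Suc n)
  then obtain z where "(x, z) \<in> R ^^ n" and "(z, y) \<in> R" by auto
  with Suc.IH hom show ?case by auto
qed simp

lemma funpow_preserved:
  assumes "\<And>x y. (x, y) \<in> R \<Longrightarrow> (f x, f y) \<in> R" and "(x, y) \<in> R"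
  shows "((f ^^ i) x, (f ^^ i) y) \<in> R"
  by (induction i) (simp_all add: assms)

lemma UNIV_12: "(UNIV :: 12 set) = {0, 1, 2, 3, 4, 5, 6, 7, 8, 9, 10, 11}"
  by (rule sym, rule card_subset_eq) simp_all

lemma UNIV_4: "(UNIV :: 4 set) = {0, 1, 2, 3}"
  by (rule sym, rule card_subset_eq) simp_all

lemma of_int_Rep_bit0 [simp]: "of_int (Rep_bit0 x) = (x :: 'a::finite bit0)"
  by (simp only: bit0.of_int_eq bit0.Rep_mod bit0.Rep_inverse)

lemma Rep_bit0_numeral_4: "Rep_bit0 (numeral w :: 4) = numeral w mod 4"
  by (simp add: bit0.Rep_numeral)

lemma even_Rep_bit0_of_int [simp]:
  "even (Rep_bit0 (of_int a :: 'a::finite bit0)) \<longleftrightarrow> even a"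
proof -
  have "Rep_bit0 (of_int a :: 'a bit0) = a mod (2 * int CARD('a))"
    using bit0.Rep_Abs_mod[where 'a = 'a] by (simp add: bit0.of_int_eq)
  then show ?thesis by (simp add: dvd_mod_iff)
qed

lemma even_Rep_bit0_add:
  "even (Rep_bit0 (x + y :: 'a::finite bit0)) \<longleftrightarrow> (even (Rep_bit0 x) \<longleftrightarrow> even (Rep_bit0 y))"
  using even_Rep_bit0_of_int[of "Rep_bit0 x + Rep_bit0 y", where 'a = 'a] by simp

lemma even_Rep_bit0_numeral [simp]:
  "even (Rep_bit0 (numeral w :: 'a::finite bit0)) \<longleftrightarrow> even (numeral w :: int)"
  using even_Rep_bit0_of_int[of "numeral w", where 'a = 'a] by simp

lemma add_8_eq_iff: "m + 8 = n \<longleftrightarrow> m = n + (4 :: 12)"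
proof -
  have "(12 :: 12) = 0" by simp
  then have "m + 8 = n \<longleftrightarrow> m + 8 + 4 = n + 4" by (metis add_right_cancel)
  also have "m + 8 + 4 = m" using \<open>(12 :: 12) = 0\<close> by (simp add: add.assoc)
  finally show ?thesis .
qed

lemma add_4_eq_iff: "m + 4 = n \<longleftrightarrow> m = n + (8 :: 12)"
  by (metis add_8_eq_iff)

lemma mod4_of_int [simp]: "mod4 (of_int a) = of_int a"
proof -
  have "Rep_bit0 (of_int a :: 12) = a mod 12"
    using bit0.Rep_Abs_mod[where 'a = 6] by (simp add: bit0.of_int_eq)
  then show ?thesis
    by (simp add: mod4_def bit0.of_int_eq[where 'a = 2] mod_mod_cancel)
qed

lemma mod4_numeral [simp]: "mod4 (numeral w) = numeral w"
  using mod4_of_int[of "numeral w"] by simp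

lemma mod4_0 [simp]: "mod4 0 = 0" and mod4_1 [simp]: "mod4 1 = 1"
  using mod4_of_int[of 0] mod4_of_int[of 1] by simp_all

lemma mod4_add: "mod4 (m + n) = mod4 m + mod4 n"
proof -
  have "mod4 (m + n) = mod4 (of_int (Rep_bit0 m + Rep_bit0 n))" by simp
  also have "\<dots> = of_int (Rep_bit0 m + Rep_bit0 n)" by (rule mod4_of_int)
  also have "\<dots> = mod4 m + mod4 n" by (simp add: mod4_def)
  finally show ?thesis .
qed

lemma mod4_eq_iff:
  "mod4 n = k \<longleftrightarrow> n \<in> {of_int (Rep_bit0 k), of_int (Rep_bit0 k) + 4, of_int (Rep_bit0 k) + 8}"
proof -
  have "\<forall>k \<in> UNIV. \<forall>n \<in> UNIV. mod4 n = k \<longleftrightarrow>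
      n \<in> {of_int (Rep_bit0 k), of_int (Rep_bit0 k) + 4, of_int (Rep_bit0 k) + 8}"
    unfolding UNIV_12 UNIV_4 by (simp add: Rep_bit0_numeral_4 bit0.Rep_0 bit0.Rep_1)
  then show ?thesis by blast
qed

lemma mod4_add_3_eq_iff:
  "mod4 (n + 3) = k \<longleftrightarrow> n \<in> {of_int (Rep_bit0 k) + 1, of_int (Rep_bit0 k) + 5, of_int (Rep_bit0 k) + 9}"
proof -
  have "\<forall>k \<in> UNIV. \<forall>n \<in> UNIV. mod4 (n + 3) = k \<longleftrightarrow>
      n \<in> {of_int (Rep_bit0 k) + 1, of_int (Rep_bit0 k) + 5, of_int (Rep_bit0 k) + 9}"
    unfolding UNIV_12 UNIV_4 by (simp add: Rep_bit0_numeral_4 bit0.Rep_0 bit0.Rep_1)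
  then show ?thesis by blast
qed

fun neighbours :: "chord \<Rightarrow> chord list" where
  "neighbours (Maj n) = [Min n, Min (n + 4), Aug (mod4 n)]"
| "neighbours (Min n) = [Maj n, Maj (n + 8), Aug (mod4 (n + 3))]"
| "neighbours (Aug k) = (let r = of_int (Rep_bit0 k) in
     [Maj r, Maj (r + 4), Maj (r + 8), Min (r + 1), Min (r + 5), Min (r + 9)])"

lemma in_S_rel_iff: "(c, d) \<in> S_rel \<longleftrightarrow> d \<in> set (neighbours c)"
proof (cases c)
  case (Aug k)
  have "(Aug k, d) \<in> S_rel \<longleftrightarrow> (\<exists>n. d = Maj n \<and> mod4 n = k) \<or> (\<exists>n. d = Min n \<and> mod4 (n + 3) = k)"
    by (auto simp: S_rel_def S_gen_def)
  then show ?thesis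
    unfolding Aug mod4_add_3_eq_iff unfolding mod4_eq_iff by (auto simp: Let_def)
qed (cases d; auto simp: S_rel_def S_gen_def add_8_eq_iff add_4_eq_iff)+

lemma sym_S_rel: "sym S_rel"
  by (auto simp: S_rel_def sym_def)

lemma Id_subset_S_rel_relpow_2: "Id \<subseteq> S_rel ^^ 2"
proof (rule Id_subset_relpow_2[OF sym_S_rel])
  show "\<exists>d. (c, d) \<in> S_rel" for c
    by (cases c) (auto simp: in_S_rel_iff Let_def)
qed

text \<open>The pitch class sums of n_M, n_m and k_aug are \<open>3n + 11\<close>, \<open>3n + 10\<close> and \<open>3k + 12\<close>.\<close>

fun pitch_sum_odd :: "chord \<Rightarrow> bool" where
  "pitch_sum_odd (Maj n) = even (Rep_bit0 n)"
| "pitch_sum_odd (Min n) = odd (Rep_bit0 n)"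
| "pitch_sum_odd (Aug k) = odd (Rep_bit0 k)"

lemma S_rel_flips_parity: "(c, d) \<in> S_rel \<Longrightarrow> pitch_sum_odd c \<noteq> pitch_sum_odd d"
  by (cases c) (auto simp: in_S_rel_iff Let_def mod4_def even_Rep_bit0_add bit0.Rep_1)

fun semitone_up :: "chord \<Rightarrow> chord" where
  "semitone_up (Maj n) = Maj (n + 1)"
| "semitone_up (Min n) = Min (n + 1)"
| "semitone_up (Aug k) = Aug (k + 1)"

lemma semitone_up_S_gen: "(c, d) \<in> S_gen \<Longrightarrow> (semitone_up c, semitone_up d) \<in> S_gen"
proof -
  assume "(c, d) \<in> S_gen"
  then obtain n where "(c, d) \<in> {(Maj n, Min n), (Maj n, Min (n + 4)), (Maj n, Aug (mod4 n)),
      (Min n, Maj n), (Min n, Maj (n + 8)), (Min n, Aug (mod4 (n + 3)))}"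
    unfolding S_gen_def by blast
  then have "(semitone_up c, semitone_up d) \<in> {(Maj (n + 1), Min (n + 1)), (Maj (n + 1), Min (n + 1 + 4)),
      (Maj (n + 1), Aug (mod4 (n + 1))), (Min (n + 1), Maj (n + 1)), (Min (n + 1), Maj (n + 1 + 8)),
      (Min (n + 1), Aug (mod4 (n + 1 + 3)))}"
    by (auto simp: mod4_add ac_simps)
  then show ?thesis unfolding S_gen_def by blast
qed

lemma semitone_up_S_rel: "(c, d) \<in> S_rel \<Longrightarrow> (semitone_up c, semitone_up d) \<in> S_rel"
  unfolding S_rel_def using semitone_up_S_gen by blast

lemma pitch_sum_odd_semitone_up: "pitch_sum_odd (semitone_up c) \<longleftrightarrow> \<not> pitch_sum_odd c"
  by (cases c) (simp_all add: even_Rep_bit0_add bit0.Rep_1)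

lemma pitch_sum_odd_funpow_semitone_up:
  "pitch_sum_odd ((semitone_up ^^ i) c) \<longleftrightarrow> (pitch_sum_odd c \<longleftrightarrow> even i)"
  by (induction i) (auto simp: pitch_sum_odd_semitone_up)

lemma funpow_semitone_up:
  "(semitone_up ^^ i) (Maj n) = Maj (n + of_nat i)"
  "(semitone_up ^^ i) (Min n) = Min (n + of_nat i)"
  "(semitone_up ^^ i) (Aug k) = Aug (k + of_nat i)"
  by (induction i) (simp_all add: ac_simps)

lemma funpow_12_semitone_up: "(semitone_up ^^ 12) c = c"
  by (cases c) (simp_all only: funpow_semitone_up of_nat_numeral, simp_all)

lemma semitone_orbits:
  obtains i where "c \<in> {(semitone_up ^^ i) (Maj 0), (semitone_up ^^ i) (Min 0), (semitone_up ^^ i) (Aug 0)}"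
proof -
  have of_nat_Rep: "of_nat (nat (Rep_bit0 x)) = (x :: 'a::finite bit0)" for x
    using Rep_bit0[of x] by (simp add: of_nat_nat)
  show ?thesis
    by (cases c) (metis insertI1 insertI2 funpow_semitone_up add_0 of_nat_Rep that)+
qed

text \<open>The \<open>remdups\<close> keeps the iterates short enough to be evaluated by the simplifier.\<close>

definition successors :: "chord list \<Rightarrow> chord list" where
  "successors xs = remdups (concat (map neighbours xs))"

lemma set_funpow_successors: "set ((successors ^^ n) xs) = (S_rel ^^ n) `` set xs"
proof (induction n)
  case (Suc n)
  have "set (successors ys) = S_rel `` set ys" for ys
    by (auto simp: successors_def in_S_rel_iff)
  with Suc.IH show ?case by (simp add: relcomp_Image)
qed simp

definition all_chords :: "chord list" where
  "all_chords = map Maj [0, 1, 2, 3, 4, 5, 6, 7, 8, 9, 10, 11] @ map Min [0, 1, 2, 3, 4, 5, 6, 7, 8, 9, 10, 11]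
     @ map Aug [0, 1, 2, 3]"

lemma set_all_chords: "set all_chords = UNIV"
proof -
  have "c \<in> set all_chords" for c
    using UNIV_12 UNIV_4 by (cases c) (auto simp: all_chords_def)
  then show ?thesis by blast
qed

lemma in_S_rel_relpow_5_from_base:
  assumes "b \<in> {Maj 0, Min 0, Aug 0}" and "pitch_sum_odd b \<noteq> pitch_sum_odd y"
  shows "(b, y) \<in> S_rel ^^ 5"
proof -
  from assms(1) consider "b = Maj 0" | "b = Min 0" | "b = Aug 0" by blast
  then have "list_all (\<lambda>y. pitch_sum_odd b \<noteq> pitch_sum_odd y \<longrightarrow> y \<in> set ((successors ^^ 5) [b]))
      all_chords"
    by cases (simp_all add: all_chords_def successors_def numeral_eq_Suc Let_def bit0.Rep_0 bit0.Rep_1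
        Rep_bit0_numeral_4)
  with assms(2) show ?thesis
    by (auto simp: list_all_iff set_all_chords set_funpow_successors)
qed

lemma in_S_rel_relpow_5:
  assumes "pitch_sum_odd x \<noteq> pitch_sum_odd y"
  shows "(x, y) \<in> S_rel ^^ 5"
proof -
  obtain i b where b: "b \<in> {Maj 0, Min 0, Aug 0}" and x: "x = (semitone_up ^^ i) b"
    using semitone_orbits[of x] by blast
  define y' where "y' = (semitone_up ^^ (11 * i)) y"
  have "12 * i = i + 11 * i" by simp
  then have "(semitone_up ^^ i) y' = ((semitone_up ^^ 12) ^^ i) y"
    by (simp only: y'_def funpow_mult funpow_add comp_apply)
  moreover have "semitone_up ^^ 12 = id" using funpow_12_semitone_up by auto
  ultimately have y: "y = (semitone_up ^^ i) y'" by simp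
  have "(b, y') \<in> S_rel ^^ 5"
    using b assms by (intro in_S_rel_relpow_5_from_base) (auto simp: x y pitch_sum_odd_funpow_semitone_up)
  moreover have "((semitone_up ^^ i) c, (semitone_up ^^ i) d) \<in> S_rel" if "(c, d) \<in> S_rel" for c d
    using semitone_up_S_rel that by (rule funpow_preserved)
  ultimately show ?thesis
    unfolding x y by (rule relpow_preserved[rotated])
qed

lemma Aug_0_Aug_2_in_S_rel_relpow_6_not_4: "(Aug 0, Aug 2) \<in> S_rel ^^ 6 - S_rel ^^ 4"
proof -
  have "Aug 2 \<in> set ((successors ^^ 6) [Aug 0]) - set ((successors ^^ 4) [Aug 0])"
    by (simp add: successors_def numeral_eq_Suc Let_def bit0.Rep_0 bit0.Rep_1 Rep_bit0_numeral_4)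
  then show ?thesis by (simp add: set_funpow_successors)
qed

theorem mainTheorem2:
  shows "(S_rel ^^ 7 = S_rel ^^ 5 \<and> inj_on (\<lambda>k. S_rel ^^ k) {..<7})"
proof
  have "S_rel ^^ (5 + 2) = S_rel ^^ 5"
    using S_rel_flips_parity Id_subset_S_rel_relpow_2
    by (rule relpow_add_2_eq_if_saturated) (auto intro: in_S_rel_relpow_5)
  then show "S_rel ^^ 7 = S_rel ^^ 5" by simp
  have "S_rel ^^ 4 \<noteq> S_rel ^^ (4 + 2)"
    using Aug_0_Aug_2_in_S_rel_relpow_6_not_4 by auto
  with S_rel_flips_parity Id_subset_S_rel_relpow_2 have "inj_on (\<lambda>k. S_rel ^^ k) {..4 + 2}"
    by (rule inj_on_relpow_atMost)
  then show "inj_on (\<lambda>k. S_rel ^^ k) {..<7}" by (simp add: lessThan_Suc_atMost[symmetric])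
qed

end
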